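(* Let $m>2n$ be positive integers. Every free independent set of the Kneser graph $KG(m,n)$ has size at most $\binom{m-1}{n-1}-\binom{m-n-1}{n-1}$. Moreover, for all integers $a\ge 0$ and $b\ge 1$, $$\phi^a_b(KG(m,n))\ge \frac{\binom{m}{n}-a\binom{m-1}{n-1}}{\binom{m-1}{n-1}-\binom{m-n-1}{n-1}}.$$
   Context: $KG(m,n)$ has as vertices the $n$-subsets of $\{1,\dots,m\}$, two being adjacent iff disjoint. An independent set $F$ of a graph is free if it is contained in at least two distinct maximal independent sets; an edge $uv$ supports $F$ if $F\cap(N(u)\cup N(v))=\emptyset$. For integers $a\ge0,b\ge1$, $\phi^a_b(G)$ is the minimum $t$ such that $V(G)$ is partitioned into independent sets $V_1,\dots,V_t$ with $V_1,\dots,V_{t-a}$ free, and there are edges $e_1,\dots,e_{t-a}$ (not necessarily distinct) with $e_i$ supporting $V_i$ and every vertex incident with at most $b$ of them; $\phi^a_b(G)=\infty$ if no such $t$ exists. *)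

theory Defs
  imports Complex_Main "HOL-Library.Extended_Nat"
begin

text \<open>Graphs are given by a vertex set V and a symmetric adjacency predicate E.\<close>

definition kneser_vertices :: "nat \<Rightarrow> nat \<Rightarrow> nat set set" where
  "kneser_vertices m n = {A. A \<subseteq> {1..m} \<and> card A = n}"

definition kneser_adj :: "nat set \<Rightarrow> nat set \<Rightarrow> bool" where
  "kneser_adj A B \<longleftrightarrow> A \<inter> B = {}"

definition independent :: "'a set \<Rightarrow> ('a \<Rightarrow> 'a \<Rightarrow> bool) \<Rightarrow> 'a set \<Rightarrow> bool" where
  "independent V E S \<longleftrightarrow> S \<subseteq> V \<and> (\<forall>u\<in>S. \<forall>v\<in>S. \<not> E u v)"

definition maximal_independent :: "'a set \<Rightarrow> ('a \<Rightarrow> 'a \<Rightarrow> bool) \<Rightarrow> 'a set \<Rightarrow> bool" where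
  "maximal_independent V E S \<longleftrightarrow> independent V E S \<and>
     (\<forall>T. independent V E T \<and> S \<subseteq> T \<longrightarrow> T = S)"

definition free_independent :: "'a set \<Rightarrow> ('a \<Rightarrow> 'a \<Rightarrow> bool) \<Rightarrow> 'a set \<Rightarrow> bool" where
  "free_independent V E F \<longleftrightarrow> independent V E F \<and>
     (\<exists>M1 M2. M1 \<noteq> M2 \<and> maximal_independent V E M1 \<and> maximal_independent V E M2
        \<and> F \<subseteq> M1 \<and> F \<subseteq> M2)"

definition nbhd :: "'a set \<Rightarrow> ('a \<Rightarrow> 'a \<Rightarrow> bool) \<Rightarrow> 'a \<Rightarrow> 'a set" where
  "nbhd V E u = {w\<in>V. E u w}"

definition supports :: "'a set \<Rightarrow> ('a \<Rightarrow> 'a \<Rightarrow> bool) \<Rightarrow> 'a \<times> 'a \<Rightarrow> 'a set \<Rightarrow> bool" where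
  "supports V E e F \<longleftrightarrow> fst e \<in> V \<and> snd e \<in> V \<and> E (fst e) (snd e) \<and>
     F \<inter> (nbhd V E (fst e) \<union> nbhd V E (snd e)) = {}"

text \<open>Feasibility of t in the definition of phi^a_b: a partition V_1..V_t into nonempty
  independent sets, V_1..V_{t-a} free (none if t \<le> a), edges e_1..e_{t-a}
  with e_i supporting V_i, each vertex incident with at most b of them (counted with multiplicity).\<close>
definition phi_feasible :: "'a set \<Rightarrow> ('a \<Rightarrow> 'a \<Rightarrow> bool) \<Rightarrow> nat \<Rightarrow> nat \<Rightarrow> nat \<Rightarrow> bool" where
  "phi_feasible V E a b t \<longleftrightarrow>
     (\<exists>P :: nat \<Rightarrow> 'a set. \<exists>e :: nat \<Rightarrow> 'a \<times> 'a.
        (\<Union>i\<in>{1..t}. P i) = V \<and>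
        (\<forall>i\<in>{1..t}. \<forall>j\<in>{1..t}. i \<noteq> j \<longrightarrow> P i \<inter> P j = {}) \<and>
        (\<forall>i\<in>{1..t}. P i \<noteq> {} \<and> independent V E (P i)) \<and>
        (\<forall>i\<in>{1..t - a}. free_independent V E (P i) \<and> supports V E (e i) (P i)) \<and>
        (\<forall>x\<in>V. card {i\<in>{1..t - a}. x = fst (e i) \<or> x = snd (e i)} \<le> b))"

definition phi :: "'a set \<Rightarrow> ('a \<Rightarrow> 'a \<Rightarrow> bool) \<Rightarrow> nat \<Rightarrow> nat \<Rightarrow> enat" where
  "phi V E a b = Inf {enat t | t. phi_feasible V E a b t}"

end

theory Submission
  imports Defs
begin

text \<open>A free independent set \<open>F\<close> of \<open>KG(m, n)\<close> is an intersecting family contained in two different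
  maximal intersecting families, which yields disjoint \<open>n\<close>-sets \<open>A\<close>, \<open>D\<close> outside \<open>F\<close> met by every
  member of \<open>F\<close>. If \<open>F \<union> {A}\<close> or \<open>F \<union> {D}\<close> is non-trivial, the Hilton--Milner theorem bounds it by
  \<open>C(m-1, n-1) - C(m-n-1, n-1) + 1\<close>; otherwise all members of \<open>F\<close> contain a fixed point of \<open>A\<close> and one
  of \<open>D\<close>, so \<open>|F| \<le> C(m-2, n-2)\<close>, which is smaller. The bound on \<open>\<phi>\<close> is a count: the \<open>t - a\<close> free
  classes obey this bound and the other \<open>a\<close> classes the Erdos--Ko--Rado bound \<open>C(m-1, n-1)\<close>.
  Hilton--Milner is proved by shifting, reducing to families stable under all shifts towards two
  fixed points; the two inequalities it needs for cross-intersecting families are proved by shifting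
  and induction on the size of the ground set.\<close>

section \<open>Uniform families\<close>

definition ksubsets :: "'a set \<Rightarrow> nat \<Rightarrow> 'a set set" where
  "ksubsets X k = {S. S \<subseteq> X \<and> card S = k}"

definition cross_intersecting :: "'a set set \<Rightarrow> 'a set set \<Rightarrow> bool" where
  "cross_intersecting A B \<longleftrightarrow> (\<forall>a\<in>A. \<forall>b\<in>B. a \<inter> b \<noteq> {})"

abbreviation intersecting :: "'a set set \<Rightarrow> bool" where
  "intersecting F \<equiv> cross_intersecting F F"

definition trivial_family :: "'a set set \<Rightarrow> bool" where
  "trivial_family F \<longleftrightarrow> (\<exists>x. \<forall>G\<in>F. x \<in> G)"

definition shadow :: "nat \<Rightarrow> 'a set set \<Rightarrow> 'a set set" where
  "shadow j Q = {S. \<exists>T\<in>Q. S \<subseteq> T \<and> card S = j}"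

lemma card_ksubsets: "finite X \<Longrightarrow> card (ksubsets X k) = card X choose k"
  unfolding ksubsets_def by (rule n_subsets)

lemma finite_ksubsets: "finite X \<Longrightarrow> finite (ksubsets X k)"
  unfolding ksubsets_def by (auto intro: finite_subset[of _ "Pow X"])

lemma finite_family: "F \<subseteq> ksubsets X k \<Longrightarrow> finite X \<Longrightarrow> finite F"
  using finite_ksubsets finite_subset by blast

lemma ksubsetsD:
  assumes "S \<in> ksubsets X k" "finite X"
  shows "S \<subseteq> X" "card S = k" "finite S"
  using assms unfolding ksubsets_def by (auto intro: finite_subset)

lemma ksubsets_0:
  assumes "finite X"
  shows "ksubsets X 0 = {{}}"
proof -
  have "S = {}" if "S \<subseteq> X" "card S = 0" for S
    using that finite_subset[OF that(1) assms] by simp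
  then show ?thesis unfolding ksubsets_def by auto
qed

lemma ex_not_mem_if_card_less: "finite S \<Longrightarrow> card S < card X \<Longrightarrow> \<exists>x\<in>X. x \<notin> S"
  using card_mono leD by blast

lemma cross_intersecting_sym: "cross_intersecting A B \<Longrightarrow> cross_intersecting B A"
  unfolding cross_intersecting_def by blast

lemma card_insert_Diff_swap:
  assumes "z \<in> S" "y \<notin> S"
  shows "card (insert y (S - {z})) = card S"
proof (cases "finite S")
  case True
  then have "card S > 0" using assms(1) card_gt_0_iff by blast
  then show ?thesis using True assms by (simp add: card_Diff_singleton)
qed simp

lemma Diff_mem_ksubsets:
  assumes "G \<in> ksubsets X k" "finite X" "R \<subseteq> G" "G \<inter> S \<subseteq> R"
  shows "G - R \<in> ksubsets (X - S) (k - card R)"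
proof -
  have "finite R" using ksubsetsD[OF assms(1,2)] assms(3) finite_subset by blast
  then show ?thesis using assms unfolding ksubsets_def by (auto simp: card_Diff_subset)
qed

lemma card_ksubsets_containing:
  assumes "finite X" "R \<subseteq> X" "card R \<le> k"
  shows "card {G\<in>ksubsets X k. R \<subseteq> G} = (card X - card R) choose (k - card R)"
proof -
  have R: "finite R" using assms(1,2) finite_subset by blast
  have "bij_betw (\<lambda>G. G - R) {G\<in>ksubsets X k. R \<subseteq> G} (ksubsets (X - R) (k - card R))"
  proof (rule bij_betw_byWitness[where f' = "\<lambda>S. S \<union> R"])
    show "(\<lambda>G. G - R) ` {G\<in>ksubsets X k. R \<subseteq> G} \<subseteq> ksubsets (X - R) (k - card R)"
      using Diff_mem_ksubsets[OF _ assms(1)] by blast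
    show "(\<lambda>S. S \<union> R) ` ksubsets (X - R) (k - card R) \<subseteq> {G\<in>ksubsets X k. R \<subseteq> G}"
    proof (rule image_subsetI)
      fix S assume "S \<in> ksubsets (X - R) (k - card R)"
      then have S: "S \<subseteq> X - R" "card S = k - card R" "finite S"
        using ksubsetsD[of S "X - R"] assms(1) by auto
      then have "card (S \<union> R) = k"
        using R assms(3) by (subst card_Un_disjoint) auto
      then show "S \<union> R \<in> {G\<in>ksubsets X k. R \<subseteq> G}"
        using S assms(2) unfolding ksubsets_def by blast
    qed
    show "\<forall>G\<in>{G\<in>ksubsets X k. R \<subseteq> G}. G - R \<union> R = G" by blast
    show "\<forall>S\<in>ksubsets (X - R) (k - card R). S \<union> R - R = S" unfolding ksubsets_def by blast
  qed
  then have "card {G\<in>ksubsets X k. R \<subseteq> G} = card (ksubsets (X - R) (k - card R))"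
    by (rule bij_betw_same_card)
  also have "\<dots> = (card X - card R) choose (k - card R)"
    using assms R by (simp add: card_ksubsets card_Diff_subset)
  finally show ?thesis .
qed

lemma card_le_containing:
  assumes "finite X" "R \<subseteq> X" "F \<subseteq> ksubsets X k" "\<forall>G\<in>F. R \<subseteq> G"
  shows "card F \<le> (card X - card R) choose (k - card R)"
proof (cases "F = {}")
  case False
  then obtain G where "G \<in> F" by blast
  moreover have "finite G" "card G = k"
    using \<open>G \<in> F\<close> assms(1,3) ksubsetsD[of G X k] by auto
  ultimately have "card R \<le> k"
    using assms(4) card_mono by metis
  have "card F \<le> card {G\<in>ksubsets X k. R \<subseteq> G}"
    using assms(3,4) by (intro card_mono) (auto simp: finite_ksubsets assms(1))
  then show ?thesis using card_ksubsets_containing[OF assms(1,2) \<open>card R \<le> k\<close>] by simp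
qed simp

lemma card_ksubsets_meeting:
  assumes "finite X" "B \<subseteq> X"
  shows "card {S\<in>ksubsets X r. S \<inter> B \<noteq> {}} + (card X - card B choose r) = card X choose r"
proof -
  have avoid: "{S\<in>ksubsets X r. S \<inter> B = {}} = ksubsets (X - B) r"
    unfolding ksubsets_def by auto
  have "card (ksubsets X r)
      = card {S\<in>ksubsets X r. S \<inter> B \<noteq> {}} + card {S\<in>ksubsets X r. S \<inter> B = {}}"
    using finite_ksubsets[OF assms(1)]
    by (subst card_Un_disjoint[symmetric]) (auto intro: arg_cong[where f = card])
  also have "card {S\<in>ksubsets X r. S \<inter> B = {}} = card X - card B choose r"
    unfolding avoid using assms by (simp add: card_ksubsets card_Diff_subset finite_subset)
  finally show ?thesis using card_ksubsets[OF assms(1)] by simp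
qed

lemma choose_pred_pred:
  assumes "2 \<le> n" "2 \<le> m"
  shows "m - 1 choose (n - 1) = (m - 2 choose (n - 2)) + (m - 2 choose (n - 1))"
proof -
  obtain a b where "m = Suc (Suc a)" "n = Suc (Suc b)"
    using assms by (metis add_2_eq_Suc le_Suc_ex)
  then show ?thesis by simp
qed

text \<open>The complements of the members of \<open>A\<close> are \<open>l\<close>-sets outside \<open>B\<close>.\<close>
lemma cross_intersecting_complementary:
  assumes "finite X" "card X = k + l" "A \<subseteq> ksubsets X k" "B \<subseteq> ksubsets X l"
    "cross_intersecting A B"
  shows "card A + card B \<le> card X choose k"
proof -
  let ?C = "(\<lambda>G. X - G) ` A"
  have inj: "inj_on (\<lambda>G. X - G) A"
    using assms(3) unfolding ksubsets_def by (intro inj_onI) blast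
  have C: "?C \<subseteq> ksubsets X l"
    using assms(1-3) by (auto simp: ksubsets_def card_Diff_subset finite_subset)
  have "?C \<inter> B = {}"
    using assms(5) unfolding cross_intersecting_def by blast
  then have "card A + card B = card (?C \<union> B)"
    using card_image[OF inj] finite_family[OF C assms(1)] finite_family[OF assms(4,1)]
    by (simp add: card_Un_disjoint)
  also have "\<dots> \<le> card (ksubsets X l)"
    using C assms(4) by (intro card_mono) (auto simp: finite_ksubsets assms(1))
  also have "\<dots> = card X choose k"
    using assms(1,2) binomial_symmetric[of l "card X"] by (simp add: card_ksubsets)
  finally show ?thesis .
qed

section \<open>Shifting\<close>

definition shift :: "'a \<Rightarrow> 'a \<Rightarrow> 'a set \<Rightarrow> 'a set" where
  "shift y z G = (if z \<in> G \<and> y \<notin> G then insert y (G - {z}) else G)"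

definition shift_family :: "'a \<Rightarrow> 'a \<Rightarrow> 'a set set \<Rightarrow> 'a set set" where
  "shift_family y z F = {G\<in>F. shift y z G \<in> F} \<union> shift y z ` {G\<in>F. shift y z G \<notin> F}"

definition shift_stable :: "'a \<Rightarrow> 'a \<Rightarrow> 'a set set \<Rightarrow> bool" where
  "shift_stable y z F \<longleftrightarrow> (\<forall>G\<in>F. shift y z G \<in> F)"

lemma shift_stableD:
  "shift_stable y z F \<Longrightarrow> G \<in> F \<Longrightarrow> z \<in> G \<Longrightarrow> y \<notin> G \<Longrightarrow> insert y (G - {z}) \<in> F"
  unfolding shift_stable_def shift_def by force

lemma shift_idem: "y \<noteq> z \<Longrightarrow> shift y z (shift y z G) = shift y z G"
  unfolding shift_def by auto

lemma inj_on_shift: "y \<noteq> z \<Longrightarrow> inj_on (shift y z) {G. z \<in> G \<and> y \<notin> G}"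
proof (rule inj_onI)
  fix a b assume "y \<noteq> z" "a \<in> {G. z \<in> G \<and> y \<notin> G}" "b \<in> {G. z \<in> G \<and> y \<notin> G}"
    "shift y z a = shift y z b"
  then have "insert y (a - {z}) = insert y (b - {z})" "z \<in> a" "z \<in> b" "y \<notin> a" "y \<notin> b"
    unfolding shift_def by auto
  then have "a - {z} = b - {z}" by (auto simp: insert_ident)
  then show "a = b" using \<open>z \<in> a\<close> \<open>z \<in> b\<close> by (metis insert_Diff)
qed

lemma shift_mem_shift_family: "y \<noteq> z \<Longrightarrow> G \<in> F \<Longrightarrow> shift y z G \<in> shift_family y z F"
  unfolding shift_family_def using shift_idem[of y z G] by (cases "shift y z G \<in> F") auto

lemma mem_shift_family_if_fixed: "G \<in> F \<Longrightarrow> shift y z G = G \<Longrightarrow> G \<in> shift_family y z F"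
  unfolding shift_family_def by auto

lemma shift_familyE:
  assumes "G \<in> shift_family y z F"
  obtains (kept) "G \<in> F" "shift y z G \<in> F"
  | (moved) H where "H \<in> F" "shift y z H \<notin> F" "z \<in> H" "y \<notin> H" "G = insert y (H - {z})"
  using assms unfolding shift_family_def shift_def by (auto split: if_splits)

lemma shift_family_empty_iff: "shift_family y z F = {} \<longleftrightarrow> F = {}"
  unfolding shift_family_def by auto

lemma finite_shift_family: "finite F \<Longrightarrow> finite (shift_family y z F)"
  unfolding shift_family_def by auto

lemma card_shift_family:
  assumes "finite F" "y \<noteq> z"
  shows "card (shift_family y z F) = card F"
proof -
  let ?P = "{G\<in>F. shift y z G \<in> F}" and ?Q = "{G\<in>F. shift y z G \<notin> F}"
  have inj: "inj_on (shift y z) ?Q"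
    by (rule inj_on_subset[OF inj_on_shift[OF assms(2)]]) (auto simp: shift_def split: if_splits)
  have "card (shift_family y z F) = card ?P + card (shift y z ` ?Q)"
    unfolding shift_family_def using assms(1) by (intro card_Un_disjoint) auto
  also have "\<dots> = card ?P + card ?Q" using card_image[OF inj] by simp
  also have "\<dots> = card F" using assms(1)
    by (subst card_Un_disjoint[symmetric]) (auto intro: arg_cong[where f = card])
  finally show ?thesis .
qed

lemma card_shift_family_filter:
  assumes "finite F" "y \<noteq> z" "\<And>G. P (shift y z G) = P G"
  shows "card {G\<in>shift_family y z F. P G} = card {G\<in>F. P G}"
proof -
  have "{G\<in>shift_family y z F. P G} = shift_family y z {G\<in>F. P G}"
    unfolding shift_family_def using assms(3) by auto
  then show ?thesis using card_shift_family[of "{G\<in>F. P G}" y z] assms by simp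
qed

lemma shift_family_ksubsets:
  assumes "F \<subseteq> ksubsets X k" "y \<in> X"
  shows "shift_family y z F \<subseteq> ksubsets X k"
proof
  fix G assume "G \<in> shift_family y z F"
  then show "G \<in> ksubsets X k"
  proof (cases rule: shift_familyE)
    case kept
    then show ?thesis using assms by auto
  next
    case (moved H)
    then show ?thesis
      using assms card_insert_Diff_swap[of z H y] unfolding ksubsets_def by auto
  qed
qed

lemma cross_intersecting_shift_family:
  assumes "cross_intersecting A B" "y \<noteq> z"
  shows "cross_intersecting (shift_family y z A) (shift_family y z B)"
  unfolding cross_intersecting_def
proof (intro ballI)
  have moved_kept: "insert y (H - {z}) \<inter> b \<noteq> {}"
    if "H \<in> A" "z \<in> H" "y \<notin> H" "b \<in> B" "shift y z b \<in> B"
      and AB: "cross_intersecting A B" for A B H b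
  proof (cases "y \<in> b \<or> z \<notin> b")
    case True
    then show ?thesis using that unfolding cross_intersecting_def by blast
  next
    case False
    have "H \<inter> shift y z b \<noteq> {}"
      using that unfolding cross_intersecting_def by blast
    then show ?thesis using False \<open>y \<notin> H\<close> by (auto simp: shift_def)
  qed
  fix a b assume a: "a \<in> shift_family y z A" and b: "b \<in> shift_family y z B"
  from a b show "a \<inter> b \<noteq> {}"
  proof (cases rule: shift_familyE)
    case kept
    from b show ?thesis
    proof (cases rule: shift_familyE)
      case kept
      then show ?thesis using \<open>a \<in> A\<close> assms(1) unfolding cross_intersecting_def by blast
    next
      case (moved H)
      then show ?thesis
        using moved_kept[OF _ _ _ \<open>a \<in> A\<close> \<open>shift y z a \<in> A\<close> cross_intersecting_sym[OF assms(1)]]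
        by blast
    qed
  next
    case (moved H)
    from b show ?thesis
    proof (cases rule: shift_familyE)
      case kept
      then show ?thesis using moved moved_kept[OF _ _ _ _ _ assms(1)] by blast
    next
      case moved
      then show ?thesis using \<open>a = insert y (H - {z})\<close> by blast
    qed
  qed
qed

lemma shadow_shift_family:
  assumes "shadow j Q \<subseteq> P" "y \<noteq> z"
  shows "shadow j (shift_family y z Q) \<subseteq> shift_family y z P"
proof
  fix S assume "S \<in> shadow j (shift_family y z Q)"
  then obtain T where T: "T \<in> shift_family y z Q" and ST: "S \<subseteq> T" and cS: "card S = j"
    unfolding shadow_def by blast
  have inP: "S' \<in> P" if "S' \<subseteq> T'" "card S' = j" "T' \<in> Q" for S' T'
    using assms(1) that unfolding shadow_def by blast
  from T show "S \<in> shift_family y z P"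
  proof (cases rule: shift_familyE)
    case kept
    show ?thesis
    proof (cases "z \<in> S \<and> y \<notin> S")
      case False
      then show ?thesis
        using inP[OF ST cS kept(1)] by (intro mem_shift_family_if_fixed) (auto simp: shift_def)
    next
      case True
      have "insert y (S - {z}) \<subseteq> (if y \<in> T then T else shift y z T)"
        using ST True by (auto simp: shift_def)
      then have "shift y z S \<in> P"
        using inP[of "insert y (S - {z})"] kept True card_insert_Diff_swap[of z S y] cS
        by (auto simp: shift_def split: if_splits)
      then show ?thesis
        using inP[OF ST cS kept(1)] unfolding shift_family_def by auto
    qed
  next
    case (moved H)
    show ?thesis
    proof (cases "y \<in> S")
      case False
      then have "S \<subseteq> H" "z \<notin> S" using ST moved by auto
      then show ?thesis
        using inP[OF _ cS moved(1)] by (intro mem_shift_family_if_fixed) (auto simp: shift_def)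
    next
      case True
      define S0 where "S0 = insert z (S - {y})"
      have "z \<notin> S" using ST moved assms(2) by auto
      then have "S0 \<in> P"
        using inP[of S0 H] ST moved True card_insert_Diff_swap[of y S z] cS
        unfolding S0_def by auto
      moreover have "shift y z S0 = S"
        unfolding shift_def S0_def using True \<open>z \<notin> S\<close> assms(2) by auto
      ultimately show ?thesis using shift_mem_shift_family[OF assms(2)] by metis
    qed
  qed
qed

lemma shift_family_containing_subset:
  "y \<noteq> z \<Longrightarrow> {G\<in>shift_family y z F. z \<in> G} \<subseteq> {G\<in>F. shift y z G \<in> F}"
  by (auto elim: shift_familyE)

lemma card_shift_family_containing_less:
  assumes "finite F" "y \<noteq> z" "\<not> shift_stable y z F"
  shows "card {G\<in>shift_family y z F. z \<in> G} < card {G\<in>F. z \<in> G}"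
proof (rule psubset_card_mono)
  obtain G where G: "G \<in> F" "shift y z G \<notin> F"
    using assms(3) unfolding shift_stable_def by blast
  then have "z \<in> G" unfolding shift_def by (auto split: if_splits)
  then show "{G\<in>shift_family y z F. z \<in> G} \<subset> {G\<in>F. z \<in> G}"
    using G shift_family_containing_subset[OF assms(2), of F] by blast
qed (use assms(1) in auto)

lemma card_shift_family_containing_le:
  assumes "finite F" "y \<noteq> z"
  shows "card {G\<in>shift_family y z F. z \<in> G} \<le> card {G\<in>F. z \<in> G}"
  using shift_family_containing_subset[OF assms(2), of F] assms(1) by (intro card_mono) auto

text \<open>Each shift away from \<open>z\<close> that changes a family lowers the number of members containing \<open>z\<close>.\<close>
lemma exists_shift_stable_pair:
  assumes "finite A" "finite B" "Inv A B" "z \<notin> Y"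
    and preserved: "\<And>A B y. y \<in> Y \<Longrightarrow> Inv A B \<Longrightarrow> Inv (shift_family y z A) (shift_family y z B)"
  shows "\<exists>A' B'. Inv A' B' \<and> finite A' \<and> finite B' \<and> card A' = card A \<and> card B' = card B \<and>
           (\<forall>y\<in>Y. shift_stable y z A' \<and> shift_stable y z B')"
  using assms(1-3)
proof (induction "card {G\<in>A. z \<in> G} + card {G\<in>B. z \<in> G}" arbitrary: A B rule: less_induct)
  case less
  show ?case
  proof (cases "\<forall>y\<in>Y. shift_stable y z A \<and> shift_stable y z B")
    case True
    then show ?thesis using less.prems by blast
  next
    case False
    then obtain y where y: "y \<in> Y" "\<not> (shift_stable y z A \<and> shift_stable y z B)" by blast
    have "y \<noteq> z" using y assms(4) by blast
    let ?A = "shift_family y z A" and ?B = "shift_family y z B"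
    have "card {G\<in>?A. z \<in> G} \<le> card {G\<in>A. z \<in> G}" "card {G\<in>?B. z \<in> G} \<le> card {G\<in>B. z \<in> G}"
      using card_shift_family_containing_le[OF _ \<open>y \<noteq> z\<close>] less.prems(1,2) by blast+
    moreover have "card {G\<in>?A. z \<in> G} < card {G\<in>A. z \<in> G} \<or> card {G\<in>?B. z \<in> G} < card {G\<in>B. z \<in> G}"
      using card_shift_family_containing_less[OF _ \<open>y \<noteq> z\<close>] less.prems(1,2) y(2) by blast
    ultimately have "card {G\<in>?A. z \<in> G} + card {G\<in>?B. z \<in> G} < card {G\<in>A. z \<in> G} + card {G\<in>B. z \<in> G}"
      by linarith
    moreover have "Inv ?A ?B" using preserved[OF y(1) less.prems(3)] .
    moreover have "finite ?A" "finite ?B"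
      using less.prems(1,2) by (simp_all add: finite_shift_family)
    ultimately obtain A' B' where "Inv A' B'" "finite A'" "finite B'" "card A' = card ?A" "card B' = card ?B"
      "\<forall>y\<in>Y. shift_stable y z A' \<and> shift_stable y z B'"
      using less.hyps by blast
    moreover have "card ?A = card A" "card ?B = card B"
      using less.prems(1,2) \<open>y \<noteq> z\<close> by (simp_all add: card_shift_family)
    ultimately show ?thesis by auto
  qed
qed

section \<open>Cross-intersecting families\<close>

definition avoiding :: "'a \<Rightarrow> 'a set set \<Rightarrow> 'a set set" where
  "avoiding z F = {G\<in>F. z \<notin> G}"

definition link :: "'a \<Rightarrow> 'a set set \<Rightarrow> 'a set set" where
  "link z F = (\<lambda>G. G - {z}) ` {G\<in>F. z \<in> G}"

lemma mem_link_iff: "S \<in> link z F \<longleftrightarrow> z \<notin> S \<and> insert z S \<in> F"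
  unfolding link_def by (auto simp: insert_absorb)

lemma card_avoiding_link:
  assumes "finite F"
  shows "card F = card (avoiding z F) + card (link z F)"
proof -
  have inj: "inj_on (\<lambda>G. G - {z}) {G\<in>F. z \<in> G}"
    by (rule inj_onI) (metis (no_types, lifting) insert_Diff mem_Collect_eq)
  have "card F = card (avoiding z F) + card {G\<in>F. z \<in> G}"
    unfolding avoiding_def using assms
    by (subst card_Un_disjoint[symmetric]) (auto intro: arg_cong[where f = card])
  then show ?thesis unfolding link_def using card_image[OF inj] by simp
qed

lemma avoiding_ksubsets: "F \<subseteq> ksubsets X k \<Longrightarrow> avoiding z F \<subseteq> ksubsets (X - {z}) k"
  unfolding avoiding_def ksubsets_def by auto

lemma link_ksubsets:
  assumes "F \<subseteq> ksubsets X k" "finite X"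
  shows "link z F \<subseteq> ksubsets (X - {z}) (k - 1)"
  using Diff_mem_ksubsets[of _ X k "{z}" "{z}"] assms unfolding link_def by auto

lemma cross_intersecting_avoiding:
  "cross_intersecting A B \<Longrightarrow> cross_intersecting (avoiding z A) (avoiding z B)"
  unfolding cross_intersecting_def avoiding_def by auto

lemma not_cross_intersecting_0:
  assumes "finite X" "A \<subseteq> ksubsets X 0" "B \<subseteq> ksubsets X 0" "A \<noteq> {}" "B \<noteq> {}"
  shows "\<not> cross_intersecting A B"
  using assms ksubsets_0[OF assms(1)] unfolding cross_intersecting_def by auto

lemma avoiding_nonempty_if_shift_stable:
  assumes "finite X" "z \<in> X" "A \<subseteq> ksubsets X k" "A \<noteq> {}" "k < card X"
    and stable: "\<forall>y\<in>X - {z}. shift_stable y z A"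
  shows "avoiding z A \<noteq> {}"
proof -
  obtain G where G: "G \<in> A" using assms(4) by blast
  show ?thesis
  proof (cases "z \<in> G")
    case False
    then show ?thesis using G unfolding avoiding_def by blast
  next
    case True
    have "G \<subseteq> X" "card G = k" "finite G" using ksubsetsD[of G X k] G assms(1,3) by auto
    moreover have "0 < k" using \<open>card G = k\<close> \<open>finite G\<close> True card_gt_0_iff by blast
    ultimately have "card (G - {z}) < card (X - {z})"
      using True assms(1,2,5) by (simp add: card_Diff_singleton)
    then obtain y where y: "y \<in> X - {z}" "y \<notin> G - {z}"
      using ex_not_mem_if_card_less[OF finite_Diff[OF \<open>finite G\<close>]] by blast
    then have "insert y (G - {z}) \<in> A" using shift_stableD[of y z A G] stable G True by auto
    then show ?thesis unfolding avoiding_def using y by auto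
  qed
qed

lemma cross_intersecting_link_if_shift_stable:
  assumes "finite X" "z \<in> X" "A \<subseteq> ksubsets X k" "B \<subseteq> ksubsets X l" "cross_intersecting A B"
    "k + l \<le> card X" and stable: "\<forall>y\<in>X - {z}. shift_stable y z A"
  shows "cross_intersecting (link z A) (link z B)"
  unfolding cross_intersecting_def
proof (intro ballI notI)
  fix S T assume "S \<in> link z A" "T \<in> link z B" and disjoint: "S \<inter> T = {}"
  then have S: "z \<notin> S" "insert z S \<in> A" and T: "z \<notin> T" "insert z T \<in> B"
    by (auto simp: mem_link_iff)
  have "insert z S \<subseteq> X" "card (insert z S) = k" "finite S"
    using ksubsetsD[of "insert z S" X k] S assms(1,3) by auto
  moreover have "insert z T \<subseteq> X" "card (insert z T) = l" "finite T"
    using ksubsetsD[of "insert z T" X l] T assms(1,4) by auto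
  ultimately have "card (S \<union> T) < card (X - {z})"
    using card_Un_le[of S T] S(1) T(1) assms(1,2,6) by (simp add: card_Diff_singleton)
  then obtain y where y: "y \<in> X - {z}" "y \<notin> S \<union> T"
    using ex_not_mem_if_card_less[OF finite_UnI[OF \<open>finite S\<close> \<open>finite T\<close>]] by blast
  then have "insert y S \<in> A"
    using shift_stableD[of y z A "insert z S"] stable S by (simp add: Diff_insert_absorb)
  moreover have "insert y S \<inter> insert z T = {}" using y S T disjoint by auto
  ultimately show False using T assms(5) unfolding cross_intersecting_def by blast
qed

lemma card_link_le_if_meeting:
  assumes "finite X" "z \<in> X" "A \<subseteq> ksubsets X k" "W \<in> ksubsets X k" "z \<notin> W"
    and meet: "\<forall>G\<in>A. G \<inter> W \<noteq> {}"
  shows "card (link z A) + (card X - 1 - k choose (k - 1)) \<le> card X - 1 choose (k - 1)"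
proof -
  let ?M = "{S\<in>ksubsets (X - {z}) (k - 1). S \<inter> W \<noteq> {}}"
  have W: "W \<subseteq> X - {z}" "card W = k" using ksubsetsD[OF assms(4,1)] assms(5) by auto
  have "link z A \<subseteq> ?M"
  proof
    fix S assume S: "S \<in> link z A"
    then have "S \<in> ksubsets (X - {z}) (k - 1)" using link_ksubsets[OF assms(3,1), of z] by blast
    moreover have "insert z S \<inter> W \<noteq> {}" using S meet unfolding mem_link_iff by blast
    ultimately show "S \<in> ?M" using assms(5) by auto
  qed
  then have "card (link z A) \<le> card ?M"
    using assms(1) by (intro card_mono) (auto simp: finite_ksubsets)
  moreover have "card ?M + (card X - 1 - k choose (k - 1)) = card X - 1 choose (k - 1)"
    using card_ksubsets_meeting[of "X - {z}" W "k - 1"] assms(1,2) W by simp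
  ultimately show ?thesis by linarith
qed

lemma shadow_avoiding: "shadow j Q \<subseteq> P \<Longrightarrow> shadow j (avoiding z Q) \<subseteq> avoiding z P"
  unfolding shadow_def avoiding_def by blast

lemma shadow_link:
  assumes "shadow j Q \<subseteq> P" "0 < j" "Q \<subseteq> ksubsets X k" "finite X"
  shows "shadow (j - 1) (link z Q) \<subseteq> link z P"
proof
  fix S assume "S \<in> shadow (j - 1) (link z Q)"
  then obtain T where "S \<subseteq> T" "card S = j - 1" "z \<notin> T" "insert z T \<in> Q"
    unfolding shadow_def by (auto simp: mem_link_iff)
  moreover have "finite T" using ksubsetsD(3)[of "insert z T" X k] calculation(4) assms(3,4) by auto
  moreover have "finite S" "z \<notin> S" using calculation(1,3,5) finite_subset by blast+
  ultimately have "insert z S \<subseteq> insert z T" "card (insert z S) = j" "z \<notin> S" "insert z T \<in> Q"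
    using assms(2) by auto
  then show "S \<in> link z P"
    using assms(1) unfolding shadow_def mem_link_iff by blast
qed

lemma choose_Suc_diff:
  assumes "0 < k" "k \<le> N"
  shows "Suc N - k choose k = (N - k choose (k - 1)) + (N - k choose k)"
  using choose_reduce_nat[of "Suc N - k" k] assms by (simp add: Suc_diff_le)

lemma cross_intersecting_sum_bound_link_empty:
  assumes X: "finite X" "card X = Suc N" "z \<in> X" and k: "0 < k" "2 * k \<le> N"
    and AB: "A \<subseteq> ksubsets X k" "B \<subseteq> ksubsets X k" "cross_intersecting A B"
    and "link z A = {}" "avoiding z A \<noteq> {}"
    and avoid: "card (avoiding z A) + card (avoiding z B) + (N - k choose k) \<le> (N choose k) + 1"
  shows "card A + card B + (Suc N - k choose k) \<le> (Suc N choose k) + 1"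
proof -
  obtain W where W: "W \<in> A" "z \<notin> W" using \<open>avoiding z A \<noteq> {}\<close> unfolding avoiding_def by blast
  then have "\<forall>G\<in>B. G \<inter> W \<noteq> {}" using AB(3) unfolding cross_intersecting_def by blast
  then have "card (link z B) + (N - k choose (k - 1)) \<le> N choose (k - 1)"
    using card_link_le_if_meeting[OF X(1,3) AB(2) _ W(2)] W(1) AB(1) X(2) by auto
  moreover have "card A = card (avoiding z A)" "card B = card (avoiding z B) + card (link z B)"
    using card_avoiding_link[of A z] card_avoiding_link[of B z] finite_family AB(1,2) X(1)
      \<open>link z A = {}\<close> by auto
  ultimately show ?thesis
    using avoid choose_Suc_diff[of k N] choose_reduce_nat[of "Suc N" k] k by simp
qed

text \<open>Inductive step of the bound below for families stable under the shifts \<open>(y, z)\<close>; \<open>IH\<close> is the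
  bound on a ground set of size \<open>N\<close>, applied to the members avoiding \<open>z\<close> and to the links of \<open>z\<close>.\<close>
lemma cross_intersecting_sum_bound_step:
  fixes X :: "'a set"
  assumes IH: "\<And>(Y :: 'a set) k A B. finite Y \<Longrightarrow> card Y = N \<Longrightarrow> 2 * k \<le> N \<Longrightarrow>
      A \<subseteq> ksubsets Y k \<Longrightarrow> B \<subseteq> ksubsets Y k \<Longrightarrow> A \<noteq> {} \<Longrightarrow> B \<noteq> {} \<Longrightarrow>
      cross_intersecting A B \<Longrightarrow> card A + card B + (N - k choose k) \<le> (N choose k) + 1"
    and X: "finite X" "card X = Suc N" "z \<in> X" and k: "0 < k" "2 * k \<le> N"
    and AB: "A \<subseteq> ksubsets X k" "B \<subseteq> ksubsets X k" "A \<noteq> {}" "B \<noteq> {}" "cross_intersecting A B"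
    and stable: "\<forall>y\<in>X - {z}. shift_stable y z A \<and> shift_stable y z B"
  shows "card A + card B + (Suc N - k choose k) \<le> (Suc N choose k) + 1"
proof -
  have Y: "finite (X - {z})" "card (X - {z}) = N" using X by auto
  have "avoiding z A \<noteq> {}" "avoiding z B \<noteq> {}"
    using avoiding_nonempty_if_shift_stable[OF X(1,3)] AB(1-4) stable k X(2) by auto
  then have avoid: "card (avoiding z A) + card (avoiding z B) + (N - k choose k) \<le> (N choose k) + 1"
    using IH[OF Y k(2) avoiding_ksubsets[OF AB(1), of z] avoiding_ksubsets[OF AB(2), of z]]
      cross_intersecting_avoiding[OF AB(5)] by blast
  consider "link z A = {}" | "link z B = {}" | "link z A \<noteq> {}" "link z B \<noteq> {}" by blast
  then show ?thesis
  proof cases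
    case 1
    from cross_intersecting_sum_bound_link_empty[OF X k AB(1,2,5) 1 \<open>avoiding z A \<noteq> {}\<close> avoid]
    show ?thesis .
  next
    case 2
    show ?thesis
      using cross_intersecting_sum_bound_link_empty[OF X k AB(2,1) cross_intersecting_sym[OF AB(5)]
          2 \<open>avoiding z B \<noteq> {}\<close>] avoid
      by (simp add: add.commute)
  next
    case 3
    have links: "link z A \<subseteq> ksubsets (X - {z}) (k - 1)" "link z B \<subseteq> ksubsets (X - {z}) (k - 1)"
      using link_ksubsets[OF AB(1) X(1)] link_ksubsets[OF AB(2) X(1)] .
    have cross: "cross_intersecting (link z A) (link z B)"
      using cross_intersecting_link_if_shift_stable[OF X(1,3) AB(1,2,5)] stable k X(2) by auto
    then have "k \<noteq> 1" using not_cross_intersecting_0[OF Y(1) _ _ 3] links by auto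
    then have "1 \<le> N - k choose (k - 2)" using k by (simp add: Suc_le_eq)
    moreover have "N - (k - 1) choose (k - 1) = (N - k choose (k - 2)) + (N - k choose (k - 1))"
      using choose_reduce_nat[of "N - (k - 1)" "k - 1"] \<open>k \<noteq> 1\<close> k by (simp add: Suc_diff_le numeral_2_eq_2)
    moreover have "card (link z A) + card (link z B) + (N - (k - 1) choose (k - 1)) \<le> (N choose (k - 1)) + 1"
      using IH[OF Y _ links 3 cross] k by simp
    moreover have "card A = card (avoiding z A) + card (link z A)"
      "card B = card (avoiding z B) + card (link z B)"
      using card_avoiding_link finite_family AB(1,2) X(1) by metis+
    moreover have "Suc N - k choose k = (N - k choose (k - 1)) + (N - k choose k)"
      "Suc N choose k = (N choose (k - 1)) + (N choose k)"
      using choose_Suc_diff[of k N] choose_reduce_nat[of "Suc N" k] k by simp_all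
    ultimately show ?thesis using avoid by linarith
  qed
qed

lemma cross_intersecting_sum_bound:
  "finite X \<Longrightarrow> card X = N \<Longrightarrow> 2 * k \<le> N \<Longrightarrow> A \<subseteq> ksubsets X k \<Longrightarrow> B \<subseteq> ksubsets X k \<Longrightarrow>
   A \<noteq> {} \<Longrightarrow> B \<noteq> {} \<Longrightarrow> cross_intersecting A B \<Longrightarrow>
   card A + card B + (N - k choose k) \<le> (N choose k) + 1"
proof (induction N arbitrary: X k A B)
  case 0
  then show ?case using not_cross_intersecting_0[of X A B] by simp
next
  case (Suc N)
  consider "k = 0" | "2 * k = Suc N" | "0 < k" "2 * k \<le> N" using Suc.prems(3) by linarith
  then show ?case
  proof cases
    case 1
    then show ?thesis using not_cross_intersecting_0[of X A B] Suc.prems by simp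
  next
    case 2
    then have "Suc N - k = k" by simp
    then show ?thesis using cross_intersecting_complementary[of X k k A B] Suc.prems 2 by simp
  next
    case 3
    obtain z where z: "z \<in> X" using Suc.prems(2) by (metis card.empty ex_in_conv nat.distinct(1))
    define Inv where "Inv A B \<longleftrightarrow> A \<subseteq> ksubsets X k \<and> B \<subseteq> ksubsets X k \<and> A \<noteq> {} \<and> B \<noteq> {} \<and>
      cross_intersecting A B" for A B
    have "Inv (shift_family y z A) (shift_family y z B)" if "y \<in> X - {z}" "Inv A B" for A B y
      using that shift_family_ksubsets cross_intersecting_shift_family shift_family_empty_iff
      unfolding Inv_def by (metis DiffD1 DiffD2 singletonI)
    moreover have "Inv A B" using Suc.prems unfolding Inv_def by blast
    ultimately obtain A' B' where "Inv A' B'" "card A' = card A" "card B' = card B"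
      "\<forall>y\<in>X - {z}. shift_stable y z A' \<and> shift_stable y z B'"
      using exists_shift_stable_pair[of A B Inv z "X - {z}"]
        finite_family[OF Suc.prems(4,1)] finite_family[OF Suc.prems(5,1)] by auto
    then show ?thesis
      using cross_intersecting_sum_bound_step[where X = X and A = A' and B = B', OF Suc.IH Suc.prems(1,2) z 3]
      unfolding Inv_def by simp
  qed
qed

lemma cross_intersecting_shadow_bound_step:
  fixes X :: "'a set"
  assumes IH: "\<And>(Y :: 'a set) j P Q. finite Y \<Longrightarrow> card Y = N \<Longrightarrow> 2 * j + 2 \<le> N \<Longrightarrow>
      P \<subseteq> ksubsets Y j \<Longrightarrow> Q \<subseteq> ksubsets Y (j + 2) \<Longrightarrow> cross_intersecting P Q \<Longrightarrow>
      shadow j Q \<subseteq> P \<Longrightarrow> card P + card Q \<le> N choose j"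
    and X: "finite X" "card X = Suc N" "z \<in> X" and j: "0 < j" "2 * j + 2 \<le> N"
    and PQ: "P \<subseteq> ksubsets X j" "Q \<subseteq> ksubsets X (j + 2)" "cross_intersecting P Q" "shadow j Q \<subseteq> P"
    and stable: "\<forall>y\<in>X - {z}. shift_stable y z P"
  shows "card P + card Q \<le> Suc N choose j"
proof -
  have Y: "finite (X - {z})" "card (X - {z}) = N" using X by auto
  have "card (avoiding z P) + card (avoiding z Q) \<le> N choose j"
    using IH[OF Y j(2) avoiding_ksubsets[OF PQ(1), of z] avoiding_ksubsets[OF PQ(2), of z]]
      cross_intersecting_avoiding[OF PQ(3)] shadow_avoiding[OF PQ(4)] by blast
  moreover have "card (link z P) + card (link z Q) \<le> N choose (j - 1)"
  proof (rule IH[OF Y])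
    show "link z P \<subseteq> ksubsets (X - {z}) (j - 1)" using link_ksubsets[OF PQ(1) X(1)] .
    show "link z Q \<subseteq> ksubsets (X - {z}) (j - 1 + 2)"
      using link_ksubsets[OF PQ(2) X(1)] j(1) by simp
    show "cross_intersecting (link z P) (link z Q)"
      using cross_intersecting_link_if_shift_stable[OF X(1,3) PQ(1-3)] stable j X(2) by auto
    show "shadow (j - 1) (link z Q) \<subseteq> link z P"
      using shadow_link[OF PQ(4) j(1) PQ(2) X(1)] .
  qed (use j in simp)
  ultimately show ?thesis
    using card_avoiding_link[of P z] card_avoiding_link[of Q z] finite_family[OF PQ(1) X(1)]
      finite_family[OF PQ(2) X(1)] choose_reduce_nat[of "Suc N" j] j(1) by simp
qed

lemma cross_intersecting_shadow_bound:
  "finite X \<Longrightarrow> card X = N \<Longrightarrow> 2 * j + 2 \<le> N \<Longrightarrow> P \<subseteq> ksubsets X j \<Longrightarrow> Q \<subseteq> ksubsets X (j + 2) \<Longrightarrow>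
   cross_intersecting P Q \<Longrightarrow> shadow j Q \<subseteq> P \<Longrightarrow> card P + card Q \<le> N choose j"
proof (induction N arbitrary: X j P Q)
  case 0
  then show ?case by simp
next
  case (Suc N)
  consider "j = 0" | "2 * j + 2 = Suc N" | "0 < j" "2 * j + 2 \<le> N" using Suc.prems(3) by linarith
  then show ?case
  proof cases
    case 1
    have "Q = {}"
    proof (rule ccontr)
      assume "Q \<noteq> {}"
      then obtain T where "T \<in> Q" by blast
      then have "{} \<in> P" using Suc.prems(7) 1 unfolding shadow_def by auto
      then show False using \<open>T \<in> Q\<close> Suc.prems(6) unfolding cross_intersecting_def by auto
    qed
    moreover have "card P \<le> 1"
      using Suc.prems(4) 1 ksubsets_0[OF Suc.prems(1)] card_mono[of "{{}}" P] by auto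
    ultimately show ?thesis using 1 by simp
  next
    case 2
    then show ?thesis using cross_intersecting_complementary[of X j "j + 2" P Q] Suc.prems by simp
  next
    case 3
    obtain z where z: "z \<in> X" using Suc.prems(2) by (metis card.empty ex_in_conv nat.distinct(1))
    define Inv where "Inv A B \<longleftrightarrow> A \<subseteq> ksubsets X j \<and> B \<subseteq> ksubsets X (j + 2) \<and>
      cross_intersecting A B \<and> shadow j B \<subseteq> A" for A B
    have "Inv (shift_family y z A) (shift_family y z B)" if "y \<in> X - {z}" "Inv A B" for A B y
      using that shift_family_ksubsets cross_intersecting_shift_family shadow_shift_family
      unfolding Inv_def by (metis DiffD1 DiffD2 singletonI)
    moreover have "Inv P Q" using Suc.prems unfolding Inv_def by blast
    ultimately obtain A B where "Inv A B" "card A = card P" "card B = card Q"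
      "\<forall>y\<in>X - {z}. shift_stable y z A \<and> shift_stable y z B"
      using exists_shift_stable_pair[of P Q Inv z "X - {z}"]
        finite_family[OF Suc.prems(4,1)] finite_family[OF Suc.prems(5,1)] by auto
    then show ?thesis
      using cross_intersecting_shadow_bound_step[where X = X and P = A and Q = B, OF Suc.IH Suc.prems(1,2) z 3]
      unfolding Inv_def by simp
  qed
qed

section \<open>The Hilton--Milner theorem\<close>

lemma inj_on_Diff: "inj_on (\<lambda>G. G - R) {G. R \<subseteq> G}"
  by (rule inj_onI) blast

lemma hilton_milner_two_cover:
  assumes X: "finite X" "card X = m" "u \<in> X" "v \<in> X" "u \<noteq> v"
    and F: "F \<subseteq> ksubsets X k" "intersecting F" "\<forall>G\<in>F. u \<in> G \<or> v \<in> G" "\<not> trivial_family F"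
    and k: "2 \<le> k" "2 * k + 1 \<le> m"
  shows "card F + (m - k - 1 choose (k - 1)) \<le> (m - 1 choose (k - 1)) + 1"
proof -
  let ?Y = "X - {u, v}"
  let ?Fuv = "{G\<in>F. u \<in> G \<and> v \<in> G}" and ?Fu = "{G\<in>F. u \<in> G \<and> v \<notin> G}"
    and ?Fv = "{G\<in>F. u \<notin> G \<and> v \<in> G}"
  have Y: "finite ?Y" "card ?Y = m - 2" using X by auto
  have "finite F" using finite_family[OF F(1) X(1)] .
  have "card (?Fuv \<union> ?Fu) = card ?Fuv + card ?Fu"
    by (rule card_Un_disjoint) (use \<open>finite F\<close> in auto)
  moreover have "card (?Fuv \<union> ?Fu \<union> ?Fv) = card (?Fuv \<union> ?Fu) + card ?Fv"
    by (rule card_Un_disjoint) (use \<open>finite F\<close> in auto)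
  moreover have "F = ?Fuv \<union> ?Fu \<union> ?Fv" using F(3) by auto
  ultimately have card_F: "card F = card ?Fuv + card ?Fu + card ?Fv" by simp
  have "card ?Fuv \<le> m - 2 choose (k - 2)"
    using card_le_containing[of X "{u, v}" ?Fuv k] X F(1) by (auto simp: numeral_2_eq_2)
  let ?A = "(\<lambda>G. G - {u}) ` ?Fu" and ?B = "(\<lambda>G. G - {v}) ` ?Fv"
  have "card ?A = card ?Fu" "card ?B = card ?Fv"
    by (intro card_image inj_on_subset[OF inj_on_Diff]; auto)+
  moreover have "?A \<subseteq> ksubsets ?Y (k - 1)" "?B \<subseteq> ksubsets ?Y (k - 1)"
    using Diff_mem_ksubsets[of _ X k "{u}" "{u, v}"] Diff_mem_ksubsets[of _ X k "{v}" "{u, v}"]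
      F(1) X(1) by auto
  moreover have "?A \<noteq> {}" "?B \<noteq> {}" using F(3,4) unfolding trivial_family_def by blast+
  moreover have "cross_intersecting ?A ?B"
    unfolding cross_intersecting_def
  proof (intro ballI)
    fix a b assume "a \<in> ?A" "b \<in> ?B"
    then obtain G H where "G \<in> F" "H \<in> F" "u \<in> G" "v \<notin> G" "u \<notin> H" "v \<in> H"
      "a = G - {u}" "b = H - {v}" by blast
    then show "a \<inter> b \<noteq> {}" using F(2) unfolding cross_intersecting_def by blast
  qed
  ultimately have "card ?Fu + card ?Fv + (m - 2 - (k - 1) choose (k - 1)) \<le> (m - 2 choose (k - 1)) + 1"
    using cross_intersecting_sum_bound[OF Y, of "k - 1" ?A ?B] k by simp
  moreover have "m - 2 - (k - 1) = m - k - 1" using k by simp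
  moreover have "m - 1 choose (k - 1) = (m - 2 choose (k - 2)) + (m - 2 choose (k - 1))"
    using choose_pred_pred k by simp
  ultimately show ?thesis using card_F \<open>card ?Fuv \<le> _\<close> by simp
qed

lemma covered_if_shift_family_trivial:
  assumes "\<not> trivial_family F" "trivial_family (shift_family y z F)" "y \<noteq> z"
  shows "\<forall>G\<in>F. y \<in> G \<or> z \<in> G"
proof (rule ccontr)
  assume "\<not> (\<forall>G\<in>F. y \<in> G \<or> z \<in> G)"
  then obtain G where G: "G \<in> F" "y \<notin> G" "z \<notin> G" by blast
  obtain c where c: "\<forall>H\<in>shift_family y z F. c \<in> H"
    using assms(2) unfolding trivial_family_def by blast
  have "G \<in> shift_family y z F"
    using G by (intro mem_shift_family_if_fixed) (auto simp: shift_def)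
  then have "c \<in> G" using c by blast
  obtain H where H: "H \<in> F" "c \<notin> H" using assms(1) unfolding trivial_family_def by blast
  then have "c \<in> shift y z H" using c shift_mem_shift_family[OF assms(3)] by blast
  then have "c = y" using H(2) unfolding shift_def by (auto split: if_splits)
  then show False using \<open>c \<in> G\<close> G(2) by blast
qed

lemma card_shift_family_avoiding_less:
  assumes "finite F" "\<not> shift_stable y z F"
  shows "card {G\<in>shift_family y z F. y \<notin> G} < card {G\<in>F. y \<notin> G}"
proof (rule psubset_card_mono)
  obtain G where G: "G \<in> F" "shift y z G \<notin> F"
    using assms(2) unfolding shift_stable_def by blast
  then have "y \<notin> G" unfolding shift_def by (auto split: if_splits)
  have "{G\<in>shift_family y z F. y \<notin> G} \<subseteq> {G\<in>F. y \<notin> G \<and> shift y z G \<in> F}"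
    by (auto elim: shift_familyE)
  then show "{G\<in>shift_family y z F. y \<notin> G} \<subset> {G\<in>F. y \<notin> G}"
    using G \<open>y \<notin> G\<close> by blast
qed (use assms(1) in auto)

text \<open>Shift the two points of \<open>T - S\<close> to \<open>u\<close> and \<open>v\<close>.\<close>
lemma shadow_subset_if_pair_stable:
  assumes F: "F \<subseteq> ksubsets X k" "finite X" and k: "2 \<le> k" and "u \<noteq> v"
    and stable: "\<forall>q\<in>X - {u, v}. shift_stable u q F \<and> shift_stable v q F"
  shows "shadow (k - 2) {G\<in>F. u \<notin> G \<and> v \<notin> G} \<subseteq> (\<lambda>G. G - {u, v}) ` {G\<in>F. u \<in> G \<and> v \<in> G}"
proof
  fix S assume "S \<in> shadow (k - 2) {G\<in>F. u \<notin> G \<and> v \<notin> G}"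
  then obtain T where T: "T \<in> F" "u \<notin> T" "v \<notin> T" and ST: "S \<subseteq> T" "card S = k - 2"
    unfolding shadow_def by blast
  have "T \<subseteq> X" "card T = k" "finite T" using ksubsetsD[of T X k] T(1) F by auto
  then have "card (T - S) = 2" using ST k by (simp add: card_Diff_subset finite_subset)
  then obtain q q' where qq: "T - S = {q, q'}" "q \<noteq> q'" by (auto simp: card_2_iff)
  then have q: "q \<in> X - {u, v}" "q' \<in> X - {u, v}" "q \<in> T" "q' \<in> T"
    using T \<open>T \<subseteq> X\<close> by auto
  have "insert u (T - {q}) \<in> F" using shift_stableD[of u q F T] stable q T by auto
  then have "insert v (insert u (T - {q}) - {q'}) \<in> F"
    using shift_stableD[of v q' F "insert u (T - {q})"] stable q qq(2) T(3) \<open>u \<noteq> v\<close> by auto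
  moreover have "insert v (insert u (T - {q}) - {q'}) = S \<union> {u, v}" using qq ST T q by auto
  ultimately have "S \<union> {u, v} \<in> {G\<in>F. u \<in> G \<and> v \<in> G}" by simp
  moreover have "S = (S \<union> {u, v}) - {u, v}" using ST T by auto
  ultimately show "S \<in> (\<lambda>G. G - {u, v}) ` {G\<in>F. u \<in> G \<and> v \<in> G}" by (rule rev_image_eqI)
qed

text \<open>By the shadow bound, the members containing both or neither of \<open>u\<close>, \<open>v\<close> are at most as many
  as the \<open>k\<close>-sets containing both.\<close>
lemma card_le_pair_replacement:
  assumes X: "finite X" "card X = m" "u \<in> X" "v \<in> X" "u \<noteq> v"
    and F: "F \<subseteq> ksubsets X k" "intersecting F" and k: "2 \<le> k" "2 * k + 1 \<le> m"
    and stable: "\<forall>q\<in>X - {u, v}. shift_stable u q F \<and> shift_stable v q F"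
  shows "card F \<le> card ({G\<in>F. (u \<in> G) \<noteq> (v \<in> G)} \<union> {G\<in>ksubsets X k. u \<in> G \<and> v \<in> G})"
proof -
  let ?Y = "X - {u, v}"
  let ?Fuv = "{G\<in>F. u \<in> G \<and> v \<in> G}" and ?Q = "{G\<in>F. u \<notin> G \<and> v \<notin> G}"
    and ?Fo = "{G\<in>F. (u \<in> G) \<noteq> (v \<in> G)}" and ?H = "{G\<in>ksubsets X k. u \<in> G \<and> v \<in> G}"
  let ?P = "(\<lambda>G. G - {u, v}) ` ?Fuv"
  have Y: "finite ?Y" "card ?Y = m - 2" using X by auto
  have "finite F" using finite_family[OF F(1) X(1)] .
  have "card ?P = card ?Fuv" by (intro card_image inj_on_subset[OF inj_on_Diff]) auto
  have "?P \<subseteq> ksubsets ?Y (k - 2)"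
    using Diff_mem_ksubsets[of _ X k "{u, v}" "{u, v}"] F(1) X by (auto simp: numeral_2_eq_2)
  moreover have "?Q \<subseteq> ksubsets ?Y (k - 2 + 2)"
  proof -
    have "k - 2 + 2 = k" using k(1) by simp
    then show ?thesis using Diff_mem_ksubsets[of _ X k "{}" "{u, v}"] F(1) X(1) by auto
  qed
  moreover have "cross_intersecting ?P ?Q"
    using F(2) unfolding cross_intersecting_def by blast
  ultimately have "card ?P + card ?Q \<le> m - 2 choose (k - 2)"
    using cross_intersecting_shadow_bound[OF Y] shadow_subset_if_pair_stable[OF F(1) X(1) k(1) X(5) stable] k
    by simp
  moreover have "card ?H = m - 2 choose (k - 2)"
    using card_ksubsets_containing[of X "{u, v}" k] X k by (simp add: numeral_2_eq_2)
  moreover have "card F = card ?Fo + card ?Fuv + card ?Q"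
  proof -
    have "card (?Fo \<union> ?Fuv) = card ?Fo + card ?Fuv"
      by (rule card_Un_disjoint) (use \<open>finite F\<close> in auto)
    moreover have "card (?Fo \<union> ?Fuv \<union> ?Q) = card (?Fo \<union> ?Fuv) + card ?Q"
      by (rule card_Un_disjoint) (use \<open>finite F\<close> in auto)
    moreover have "F = ?Fo \<union> ?Fuv \<union> ?Q" by auto
    ultimately show ?thesis by simp
  qed
  moreover have "card (?Fo \<union> ?H) = card ?Fo + card ?H"
    using \<open>finite F\<close> X(1) by (intro card_Un_disjoint) (auto simp: finite_ksubsets)
  ultimately show ?thesis using \<open>card ?P = card ?Fuv\<close> by linarith
qed

lemma not_trivial_pair_replacement:
  assumes F: "F \<subseteq> ksubsets X k" "finite X" "\<not> trivial_family F" and k: "0 < k" and "u \<noteq> v"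
    and stable: "\<forall>q\<in>X - {u, v}. shift_stable u q F \<and> shift_stable v q F"
  shows "\<not> trivial_family ({G\<in>F. (u \<in> G) \<noteq> (v \<in> G)} \<union> {G\<in>ksubsets X k. u \<in> G \<and> v \<in> G})"
    (is "\<not> trivial_family ?F'")
proof
  assume "trivial_family ?F'"
  then obtain x where x: "\<forall>G\<in>?F'. x \<in> G" unfolding trivial_family_def by blast
  obtain G where G: "G \<in> F" "x \<notin> G" using F(3) unfolding trivial_family_def by blast
  show False
  proof (cases "u \<in> G \<or> v \<in> G")
    case True
    then have "G \<in> ?F'" using G(1) F(1) by blast
    then show False using x G(2) by blast
  next
    case False
    have "G \<subseteq> X" "card G = k" "finite G" using ksubsetsD[of G X k] G(1) F(1,2) by auto
    then obtain g where g: "g \<in> G" using k by fastforce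
    then have "g \<in> X - {u, v}" using \<open>G \<subseteq> X\<close> False by auto
    then have "insert u (G - {g}) \<in> F" "insert v (G - {g}) \<in> F"
      using shift_stableD[of u g F G] shift_stableD[of v g F G] stable G(1) g False by auto
    then have "insert u (G - {g}) \<in> ?F'" "insert v (G - {g}) \<in> ?F'"
      using False \<open>u \<noteq> v\<close> by simp_all
    then have "x \<in> insert u (G - {g})" "x \<in> insert v (G - {g})"
      using bspec[OF x] by blast+
    then show False using G(2) False \<open>u \<noteq> v\<close> by auto
  qed
qed

lemma hilton_milner_pair_stable:
  assumes X: "finite X" "card X = m" "u \<in> X" "v \<in> X" "u \<noteq> v"
    and F: "F \<subseteq> ksubsets X k" "intersecting F" "\<not> trivial_family F" and k: "2 \<le> k" "2 * k + 1 \<le> m"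
    and stable: "\<forall>q\<in>X - {u, v}. shift_stable u q F \<and> shift_stable v q F"
  shows "card F + (m - k - 1 choose (k - 1)) \<le> (m - 1 choose (k - 1)) + 1"
proof -
  let ?F' = "{G\<in>F. (u \<in> G) \<noteq> (v \<in> G)} \<union> {G\<in>ksubsets X k. u \<in> G \<and> v \<in> G}"
  have "?F' \<subseteq> ksubsets X k" using F(1) by auto
  moreover have "intersecting ?F'" using F(2) unfolding cross_intersecting_def by blast
  moreover have "\<forall>G\<in>?F'. u \<in> G \<or> v \<in> G" by auto
  moreover have "\<not> trivial_family ?F'"
    using not_trivial_pair_replacement[OF F(1) X(1) F(3) _ X(5) stable] k by simp
  ultimately have "card ?F' + (m - k - 1 choose (k - 1)) \<le> (m - 1 choose (k - 1)) + 1"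
    using hilton_milner_two_cover[OF X] k by blast
  then show ?thesis using card_le_pair_replacement[OF X F(1,2) k stable] by linarith
qed

lemma card_avoiding_pair_shift_family_less:
  assumes "finite F" "y \<in> {u, v}" "q \<notin> {u, v}" "\<not> shift_stable y q F"
  shows "card {G\<in>shift_family y q F. u \<notin> G} + card {G\<in>shift_family y q F. v \<notin> G}
    < card {G\<in>F. u \<notin> G} + card {G\<in>F. v \<notin> G}"
proof -
  have less: "card {G\<in>shift_family y q F. y \<notin> G} < card {G\<in>F. y \<notin> G}"
    using card_shift_family_avoiding_less[OF assms(1,4)] .
  have le: "card {G\<in>shift_family y q F. w \<notin> G} \<le> card {G\<in>F. w \<notin> G}" if "w \<in> {u, v}" for w
  proof (cases "w = y")
    case True
    then show ?thesis using less by simp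
  next
    case False
    then have "card {G\<in>shift_family y q F. w \<notin> G} = card {G\<in>F. w \<notin> G}"
      using that assms(1-3) by (intro card_shift_family_filter) (auto simp: shift_def)
    then show ?thesis by simp
  qed
  show ?thesis using less le[of u] le[of v] assms(2) by auto
qed

text \<open>A shift towards \<open>u\<close> or \<open>v\<close> either keeps the family non-trivial, and then
  fewer members miss \<open>u\<close> or \<open>v\<close>, or makes it trivial, and then every member meets the two points
  of the shift.\<close>
theorem hilton_milner:
  assumes X: "finite X" "card X = m"
    and F: "F \<subseteq> ksubsets X k" "intersecting F" "\<not> trivial_family F" and k: "2 \<le> k" "2 * k + 1 \<le> m"
  shows "card F + (m - k - 1 choose (k - 1)) \<le> (m - 1 choose (k - 1)) + 1"
proof -
  have "\<not> card X \<le> Suc 0" using X k by simp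
  then obtain u v where uv: "u \<in> X" "v \<in> X" "u \<noteq> v" using card_le_Suc0_iff_eq[OF X(1)] by blast
  show ?thesis
    using F
  proof (induction "card {G\<in>F. u \<notin> G} + card {G\<in>F. v \<notin> G}" arbitrary: F rule: less_induct)
    case less
    show ?case
    proof (cases "\<forall>q\<in>X - {u, v}. shift_stable u q F \<and> shift_stable v q F")
      case True
      then show ?thesis using hilton_milner_pair_stable[OF X uv less.prems k] by blast
    next
      case False
      then obtain y q where yq: "y \<in> {u, v}" "q \<in> X - {u, v}" "\<not> shift_stable y q F" by blast
      then have "y \<noteq> q" "y \<in> X" using uv by auto
      let ?S = "shift_family y q F"
      have "finite F" using finite_family[OF less.prems(1) X(1)] .
      have S: "?S \<subseteq> ksubsets X k" "intersecting ?S"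
        using shift_family_ksubsets[OF less.prems(1) \<open>y \<in> X\<close>]
          cross_intersecting_shift_family[OF less.prems(2) \<open>y \<noteq> q\<close>] by auto
      show ?thesis
      proof (cases "trivial_family ?S")
        case True
        then have "\<forall>G\<in>F. y \<in> G \<or> q \<in> G"
          using covered_if_shift_family_trivial[OF less.prems(3) _ \<open>y \<noteq> q\<close>] by blast
        then show ?thesis
          using hilton_milner_two_cover[OF X \<open>y \<in> X\<close> _ \<open>y \<noteq> q\<close> less.prems(1,2) _ less.prems(3) k] yq
          by blast
      next
        case False
        have "card {G\<in>?S. u \<notin> G} + card {G\<in>?S. v \<notin> G} < card {G\<in>F. u \<notin> G} + card {G\<in>F. v \<notin> G}"
          using card_avoiding_pair_shift_family_less[OF \<open>finite F\<close>] yq by blast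
        then show ?thesis
          using less.hyps[OF _ S False] card_shift_family[OF \<open>finite F\<close> \<open>y \<noteq> q\<close>] by simp
      qed
    qed
  qed
qed

lemma trivial_family_if_card_1:
  assumes "F \<subseteq> ksubsets X 1" "intersecting F"
  shows "trivial_family F"
proof (cases "F = {}")
  case False
  then obtain G where "G \<in> F" by blast
  then obtain a where "G = {a}" using assms(1) unfolding ksubsets_def by (auto simp: card_1_singleton_iff)
  have "a \<in> H" if H: "H \<in> F" for H
  proof -
    obtain b where "H = {b}" using H assms(1) unfolding ksubsets_def by (auto simp: card_1_singleton_iff)
    moreover have "G \<inter> H \<noteq> {}" using assms(2) \<open>G \<in> F\<close> H unfolding cross_intersecting_def by blast
    ultimately show ?thesis using \<open>G = {a}\<close> by auto
  qed
  then show ?thesis unfolding trivial_family_def by blast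
qed (simp add: trivial_family_def)

theorem erdos_ko_rado:
  assumes X: "finite X" "card X = m" and F: "F \<subseteq> ksubsets X n" "intersecting F"
    and n: "0 < n" "2 * n < m"
  shows "card F \<le> m - 1 choose (n - 1)"
proof (cases "trivial_family F")
  case True
  then obtain x where x: "\<forall>G\<in>F. x \<in> G" unfolding trivial_family_def by blast
  show ?thesis
  proof (cases "F = {}")
    case False
    then have "x \<in> X" using x F(1) unfolding ksubsets_def by blast
    then show ?thesis using card_le_containing[of X "{x}" F n] X F(1) x by simp
  qed simp
next
  case False
  then have "n \<noteq> 1" using trivial_family_if_card_1 F by blast
  then have "card F + (m - n - 1 choose (n - 1)) \<le> (m - 1 choose (n - 1)) + 1"
    using hilton_milner[OF X F False] n by simp
  moreover have "1 \<le> m - n - 1 choose (n - 1)" using n by (simp add: Suc_le_eq)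
  ultimately show ?thesis by linarith
qed

lemma intersecting_insert:
  "intersecting F \<Longrightarrow> C \<noteq> {} \<Longrightarrow> \<forall>G\<in>F. G \<inter> C \<noteq> {} \<Longrightarrow> intersecting (insert C F)"
  unfolding cross_intersecting_def by (simp add: inf_commute)

lemma card_le_if_insert_not_trivial:
  assumes X: "finite X" "card X = m" and F: "F \<subseteq> ksubsets X n" "intersecting F"
    and C: "C \<in> ksubsets X n" "C \<notin> F" "\<forall>G\<in>F. G \<inter> C \<noteq> {}" "\<not> trivial_family (insert C F)"
    and n: "2 \<le> n" "2 * n < m"
  shows "card F + (m - n - 1 choose (n - 1)) \<le> m - 1 choose (n - 1)"
proof -
  have "C \<noteq> {}" using C(1) n(1) unfolding ksubsets_def by auto
  then have "intersecting (insert C F)" using intersecting_insert F(2) C(3) by blast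
  then have "card (insert C F) + (m - n - 1 choose (n - 1)) \<le> (m - 1 choose (n - 1)) + 1"
    using hilton_milner[OF X _ _ C(4)] F(1) C(1) n by simp
  then show ?thesis using C(2) finite_family[OF F(1) X(1)] by simp
qed

text \<open>If adding \<open>A\<close> or \<open>D\<close> keeps the family non-trivial, Hilton--Milner applies; otherwise all
  members contain a common point of \<open>A\<close> and a common point of \<open>D\<close>.\<close>
lemma card_le_if_meets_disjoint_pair:
  assumes X: "finite X" "card X = m" and F: "F \<subseteq> ksubsets X n" "intersecting F"
    and AD: "A \<in> ksubsets X n" "D \<in> ksubsets X n" "A \<inter> D = {}" "A \<notin> F" "D \<notin> F"
    and meet: "\<forall>G\<in>F. G \<inter> A \<noteq> {} \<and> G \<inter> D \<noteq> {}" and n: "0 < n" "2 * n < m"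
  shows "card F + (m - n - 1 choose (n - 1)) \<le> m - 1 choose (n - 1)"
proof (cases "F = {}")
  case True
  then show ?thesis by (simp add: binomial_right_mono)
next
  case False
  then obtain G where "G \<in> F" by blast
  have "n \<noteq> 1"
  proof
    assume "n = 1"
    then have "card G = Suc 0" "card A = Suc 0"
      using \<open>G \<in> F\<close> F(1) AD(1) unfolding ksubsets_def by auto
    then obtain a b where "G = {a}" "A = {b}" unfolding card_1_singleton_iff by blast
    moreover have "G \<inter> A \<noteq> {}" using meet \<open>G \<in> F\<close> by blast
    ultimately show False using \<open>G \<in> F\<close> AD(4) by auto
  qed
  with n have n2: "2 \<le> n" by simp
  consider "\<not> trivial_family (insert A F)" | "\<not> trivial_family (insert D F)"
    | "trivial_family (insert A F)" "trivial_family (insert D F)" by blast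
  then show ?thesis
  proof cases
    case 1
    have "\<forall>G\<in>F. G \<inter> A \<noteq> {}" using meet by blast
    from card_le_if_insert_not_trivial[OF X F AD(1,4) this 1 n2 n(2)] show ?thesis .
  next
    case 2
    have "\<forall>G\<in>F. G \<inter> D \<noteq> {}" using meet by blast
    from card_le_if_insert_not_trivial[OF X F AD(2,5) this 2 n2 n(2)] show ?thesis .
  next
    case 3
    then obtain x y where "x \<in> A" "y \<in> D" and xy: "\<forall>G\<in>F. {x, y} \<subseteq> G"
      unfolding trivial_family_def by (metis insert_subset empty_subsetI insertCI)
    then have "x \<noteq> y" "{x, y} \<subseteq> X"
      using AD(1-3) unfolding ksubsets_def by auto
    then have "card F \<le> m - 2 choose (n - 2)"
      using card_le_containing[OF X(1) _ F(1) xy] X(2) by (simp add: numeral_2_eq_2)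
    moreover have "m - n - 1 choose (n - 1) \<le> m - 2 choose (n - 1)"
      using n2 by (intro binomial_right_mono) simp
    ultimately show ?thesis using choose_pred_pred[OF n2] n by simp
  qed
qed

section \<open>Kneser graphs\<close>

lemma independent_kneser_iff: "independent V kneser_adj S \<longleftrightarrow> S \<subseteq> V \<and> intersecting S"
  unfolding independent_def kneser_adj_def cross_intersecting_def by auto

lemma maximal_independent_kneser_disjoint:
  assumes "maximal_independent V kneser_adj M" "A \<in> V" "A \<notin> M" "A \<noteq> {}"
  shows "\<exists>D\<in>M. A \<inter> D = {}"
proof (rule ccontr)
  assume "\<not> (\<exists>D\<in>M. A \<inter> D = {})"
  moreover have "M \<subseteq> V" "intersecting M"
    using assms(1) unfolding maximal_independent_def independent_kneser_iff by auto
  ultimately have "independent V kneser_adj (insert A M)"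
    using intersecting_insert[of M A] assms(2,4) unfolding independent_kneser_iff by (auto simp: inf_commute)
  then show False using assms(1,3) unfolding maximal_independent_def by blast
qed

lemma free_independent_kneser_disjoint_pair:
  assumes "free_independent V kneser_adj F" "{} \<notin> V"
  obtains A D where "A \<in> V" "D \<in> V" "A \<inter> D = {}" "A \<notin> F" "D \<notin> F"
    "\<forall>G\<in>F. G \<inter> A \<noteq> {} \<and> G \<inter> D \<noteq> {}"
proof -
  obtain M M' A where M: "maximal_independent V kneser_adj M" "maximal_independent V kneser_adj M'"
    "F \<subseteq> M" "F \<subseteq> M'" "A \<in> M" "A \<notin> M'"
    using assms(1) unfolding free_independent_def by (metis subsetI subset_antisym)
  have MV: "M \<subseteq> V" "intersecting M" "M' \<subseteq> V" "intersecting M'"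
    using M(1,2) unfolding maximal_independent_def independent_kneser_iff by auto
  then have "A \<in> V" "A \<noteq> {}" using M(5) assms(2) by auto
  then obtain D where D: "D \<in> M'" "A \<inter> D = {}"
    using maximal_independent_kneser_disjoint[OF M(2) _ M(6)] by blast
  have "D \<notin> F" using M(3,5) D(2) MV(2) unfolding cross_intersecting_def by blast
  moreover have "\<forall>G\<in>F. G \<inter> A \<noteq> {} \<and> G \<inter> D \<noteq> {}"
    using M(3-5) D(1) MV(2,4) unfolding cross_intersecting_def by blast
  ultimately show ?thesis using that \<open>A \<in> V\<close> D MV(3) M(4,6) by blast
qed

lemma kneser_vertices_eq: "kneser_vertices m n = ksubsets {1..m} n"
  unfolding kneser_vertices_def ksubsets_def by auto

lemma free_independent_kneser_card_le:
  assumes n: "0 < n" "2 * n < m" and F: "free_independent (kneser_vertices m n) kneser_adj F"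
  shows "card F \<le> (m - 1 choose (n - 1)) - (m - n - 1 choose (n - 1))"
proof -
  have "{} \<notin> kneser_vertices m n" using n(1) unfolding kneser_vertices_def by auto
  then obtain A D where "A \<in> ksubsets {1..m} n" "D \<in> ksubsets {1..m} n" "A \<inter> D = {}" "A \<notin> F" "D \<notin> F"
    "\<forall>G\<in>F. G \<inter> A \<noteq> {} \<and> G \<inter> D \<noteq> {}"
    using free_independent_kneser_disjoint_pair[OF F] unfolding kneser_vertices_eq by blast
  moreover have "F \<subseteq> ksubsets {1..m} n" "intersecting F"
    using F unfolding free_independent_def independent_kneser_iff kneser_vertices_eq by auto
  ultimately have "card F + (m - n - 1 choose (n - 1)) \<le> m - 1 choose (n - 1)"
    using card_le_if_meets_disjoint_pair[of "{1..m}"] n by simp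
  then show ?thesis by linarith
qed

lemma phi_feasible_if_phi_eq:
  assumes "phi V E a b = enat t"
  shows "phi_feasible V E a b t"
proof -
  let ?S = "{enat t | t. phi_feasible V E a b t}"
  have "?S \<noteq> {}"
  proof
    assume "?S = {}"
    then have "phi V E a b = \<infinity>" unfolding phi_def by (simp add: top_enat_def)
    then show False using assms by simp
  qed
  then obtain s where "s \<in> ?S" by blast
  then have "Inf ?S \<in> ?S" by (rule wellorder_InfI)
  then show ?thesis using assms unfolding phi_def by auto
qed

lemma card_le_if_partition_bounded:
  fixes P :: "nat \<Rightarrow> 'a set"
  assumes V: "finite V" "(\<Union>i\<in>{1..t}. P i) = V"
    and disjoint: "\<forall>i\<in>{1..t}. \<forall>j\<in>{1..t}. i \<noteq> j \<longrightarrow> P i \<inter> P j = {}"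
    and bounds: "\<forall>i\<in>{1..t}. card (P i) \<le> K" "\<forall>i\<in>{1..t - a}. card (P i) \<le> H"
  shows "card V \<le> t * H + a * K"
proof -
  have "card V = (\<Sum>i\<in>{1..t}. card (P i))"
    using card_UN_disjoint[of "{1..t}" P] V disjoint by auto
  also have "\<dots> = (\<Sum>i\<in>{1..t} - {1..t - a}. card (P i)) + (\<Sum>i\<in>{1..t - a}. card (P i))"
    by (rule sum.subset_diff) auto
  also have "\<dots> \<le> card ({1..t} - {1..t - a}) * K + card {1..t - a} * H"
    using bounds sum_bounded_above[of "{1..t} - {1..t - a}" "\<lambda>i. card (P i)" K]
      sum_bounded_above[of "{1..t - a}" "\<lambda>i. card (P i)" H] by (intro add_mono) auto
  also have "\<dots> \<le> a * K + t * H"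
    by (intro add_mono mult_right_mono) (auto simp: card_Diff_subset)
  finally show ?thesis by simp
qed

text \<open>For \<open>n = 1\<close> the denominator is \<open>0\<close> and the
  claim holds because \<open>x / 0 = 0\<close>.\<close>
lemma phi_kneser_lower_bound:
  assumes n: "0 < n" "2 * n < m" and phi: "phi (kneser_vertices m n) kneser_adj a b = enat t"
  shows "real t \<ge> (real (m choose n) - real a * real (m - 1 choose (n - 1)))
                     / (real (m - 1 choose (n - 1)) - real (m - n - 1 choose (n - 1)))"
proof -
  let ?V = "kneser_vertices m n"
  define K where "K = m - 1 choose (n - 1)"
  define H where "H = K - (m - n - 1 choose (n - 1))"
  obtain P :: "nat \<Rightarrow> nat set set" and e where P:
    "(\<Union>i\<in>{1..t}. P i) = ?V" "\<forall>i\<in>{1..t}. \<forall>j\<in>{1..t}. i \<noteq> j \<longrightarrow> P i \<inter> P j = {}"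
    "\<forall>i\<in>{1..t}. P i \<noteq> {} \<and> independent ?V kneser_adj (P i)"
    "\<forall>i\<in>{1..t - a}. free_independent ?V kneser_adj (P i) \<and> supports ?V kneser_adj (e i) (P i)"
    using phi_feasible_if_phi_eq[OF phi] unfolding phi_feasible_def by blast
  have "\<forall>i\<in>{1..t}. card (P i) \<le> K"
    using P(3) erdos_ko_rado[of "{1..m}" m _ n] n
    unfolding K_def independent_kneser_iff kneser_vertices_eq by simp
  moreover have "\<forall>i\<in>{1..t - a}. card (P i) \<le> H"
    using P(4) free_independent_kneser_card_le[OF n] unfolding H_def K_def by blast
  ultimately have "m choose n \<le> t * H + a * K"
    using card_le_if_partition_bounded[OF _ P(1,2)] card_ksubsets[of "{1..m}" n]
    by (simp add: kneser_vertices_eq finite_ksubsets)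
  then have "real (m choose n) \<le> real t * real H + real a * real K"
    by (metis of_nat_add of_nat_le_iff of_nat_mult)
  then have "real (m choose n) - real a * real K \<le> real t * real H" by linarith
  moreover have denominator: "real K - real (m - n - 1 choose (n - 1)) = real H"
    unfolding H_def K_def by (simp add: of_nat_diff binomial_right_mono)
  ultimately show ?thesis
    unfolding K_def[symmetric] denominator by (cases "H = 0") (simp_all add: pos_divide_le_eq)
qed

theorem mainTheorem12:
  fixes m n :: nat
  assumes "0 < n" and "2 * n < m"
  shows "(\<forall>F. free_independent (kneser_vertices m n) kneser_adj F \<longrightarrow>
            card F \<le> (m - 1 choose (n - 1)) - (m - n - 1 choose (n - 1)))
       \<and> (\<forall>a b :: nat. b \<ge> 1 \<longrightarrow> (\<forall>t::nat.
            phi (kneser_vertices m n) kneser_adj a b = enat t \<longrightarrow>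
            real t \<ge> (real (m choose n) - real a * real (m - 1 choose (n - 1)))
                     / (real (m - 1 choose (n - 1)) - real (m - n - 1 choose (n - 1)))))"
  using free_independent_kneser_card_le[OF assms] phi_kneser_lower_bound[OF assms] by blast

end
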